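(* Let $\mathcal H$ be a separable complex Hilbert space, $A\in L(\mathcal H)^+$, $\mathcal S$ a closed subspace, $\mathcal N=\mathcal S\cap N(A)$, and $T\in L(\mathcal H)$ with $R(T)\subseteq\mathcal S$. Then $T$ is an $A$-projection into $\mathcal S$ if and only if $(A,\mathcal S)$ is compatible and $P_{\mathcal S\ominus\mathcal N}T=P_{A,\mathcal S\ominus\mathcal N}$.
   Context: $N(\cdot)$ is the nullspace, $\mathcal S\ominus\mathcal N=\mathcal S\cap\mathcal N^\perp$, $P_{\mathcal M}$ the orthogonal projection onto $\mathcal M$. $(A,\mathcal S)$ is compatible if there exists $Q\in L(\mathcal H)$ with $Q^2=Q$, $R(Q)=\mathcal S$, $AQ=Q^*A$. When $(A,\mathcal S)$ is compatible, $\mathcal H=(\mathcal S\ominus\mathcal N)\dotplus A(\mathcal S)^\perp$ and $P_{A,\mathcal S\ominus\mathcal N}$ denotes the (bounded) oblique projection with range $\mathcal S\ominus\mathcal N$ and nullspace $A(\mathcal S)^\perp$. With $\|z\|_A=\langle Az,z\rangle^{1/2}$, $T$ is an $A$-projection into $\mathcal S$ if $R(T)\subseteq\mathcal S$ and $\|y-Ty\|_A\le\|y-s\|_A$ for all $y\in\mathcal H$, $s\in\mathcal S$. *)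

theory Defs
  imports "HOL-Analysis.Analysis"
begin

text \<open>Complex Hilbert spaces: a Banach space (over the reals, as in the library)
carrying a compatible complex scalar multiplication and a complex inner product,
linear in the first argument and conjugate-linear in the second,
which induces the norm.\<close>

class chilbert_space = banach +
  fixes scaleC :: "complex \<Rightarrow> 'a \<Rightarrow> 'a"
    and cinner :: "'a \<Rightarrow> 'a \<Rightarrow> complex"
  assumes scaleC_add_right: "scaleC a (x + y) = scaleC a x + scaleC a y"
    and scaleC_add_left: "scaleC (a + b) x = scaleC a x + scaleC b x"
    and scaleC_scaleC: "scaleC a (scaleC b x) = scaleC (a * b) x"
    and scaleC_one: "scaleC 1 x = x"
    and scaleR_scaleC: "scaleR r x = scaleC (complex_of_real r) x"
    and cinner_add_left: "cinner (x + y) z = cinner x z + cinner y z"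
    and cinner_scaleC_left: "cinner (scaleC a x) y = a * cinner x y"
    and cinner_commute: "cinner y x = cnj (cinner x y)"
    and cinner_self_norm: "cinner x x = complex_of_real ((norm x)\<^sup>2)"

definition bounded_clinear :: "('a::chilbert_space \<Rightarrow> 'a) \<Rightarrow> bool" where
  "bounded_clinear T \<longleftrightarrow>
     (\<forall>x y. T (x + y) = T x + T y) \<and> (\<forall>c x. T (scaleC c x) = scaleC c (T x)) \<and>
     (\<exists>K. \<forall>x. norm (T x) \<le> norm x * K)"

definition positive_op :: "('a::chilbert_space \<Rightarrow> 'a) \<Rightarrow> bool" where
  "positive_op A \<longleftrightarrow> bounded_clinear A \<and>
     (\<forall>x. Im (cinner (A x) x) = 0 \<and> Re (cinner (A x) x) \<ge> 0)"

definition is_adjoint :: "('a::chilbert_space \<Rightarrow> 'a) \<Rightarrow> ('a \<Rightarrow> 'a) \<Rightarrow> bool" where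
  "is_adjoint Q Qs \<longleftrightarrow> (\<forall>x y. cinner (Q x) y = cinner x (Qs y))"

definition closed_csubspace :: "'a::chilbert_space set \<Rightarrow> bool" where
  "closed_csubspace S \<longleftrightarrow> 0 \<in> S \<and> (\<forall>x\<in>S. \<forall>y\<in>S. x + y \<in> S) \<and>
     (\<forall>c. \<forall>x\<in>S. scaleC c x \<in> S) \<and> closed S"

definition separable_space :: "'a::chilbert_space itself \<Rightarrow> bool" where
  "separable_space _ \<longleftrightarrow> (\<exists>D::'a set. countable D \<and> closure D = UNIV)"

definition nullspace :: "('a::chilbert_space \<Rightarrow> 'a) \<Rightarrow> 'a set" where
  "nullspace A = {x. A x = 0}"

definition orth :: "'a::chilbert_space set \<Rightarrow> 'a set" where
  "orth M = {x. \<forall>y\<in>M. cinner x y = 0}"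

definition odiff :: "'a::chilbert_space set \<Rightarrow> 'a set \<Rightarrow> 'a set" where
  "odiff S N = S \<inter> orth N"

definition orth_proj :: "'a::chilbert_space set \<Rightarrow> 'a \<Rightarrow> 'a" where
  "orth_proj M x = (THE p. p \<in> M \<and> x - p \<in> orth M)"

text \<open>Oblique projection with range M and nullspace K (for H = M direct-sum K).\<close>
definition oblique_proj :: "'a::chilbert_space set \<Rightarrow> 'a set \<Rightarrow> 'a \<Rightarrow> 'a" where
  "oblique_proj M K x = (THE m. m \<in> M \<and> x - m \<in> K)"

definition compatible :: "('a::chilbert_space \<Rightarrow> 'a) \<Rightarrow> 'a set \<Rightarrow> bool" where
  "compatible A S \<longleftrightarrow> (\<exists>Q Qs. bounded_clinear Q \<and> is_adjoint Q Qs \<and> Q \<circ> Q = Q \<and>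
       range Q = S \<and> A \<circ> Q = Qs \<circ> A)"

definition normA :: "('a::chilbert_space \<Rightarrow> 'a) \<Rightarrow> 'a \<Rightarrow> real" where
  "normA A z = sqrt (Re (cinner (A z) z))"

definition is_A_projection :: "('a::chilbert_space \<Rightarrow> 'a) \<Rightarrow> 'a set \<Rightarrow> ('a \<Rightarrow> 'a) \<Rightarrow> bool" where
  "is_A_projection A S T \<longleftrightarrow> range T \<subseteq> S \<and>
     (\<forall>y. \<forall>s\<in>S. normA A (y - T y) \<le> normA A (y - s))"

end

theory Submission
  imports Defs
begin

text \<open>Write \<open>N = S \<inter> N(A)\<close>, \<open>M = S \<ominus> N\<close> and \<open>K = A(S)\<^sup>\<perp>\<close>. Since \<open>\<langle>A u, v\<rangle>\<close> is a
semi-inner product, \<open>Ty\<close> minimises \<open>\<parallel>y - s\<parallel>\<^sub>A\<close> over \<open>S\<close> exactly when the residual \<open>y - Ty\<close>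
lies in \<open>K\<close>. Given a bounded \<open>T\<close> with this property, \<open>Q = T - P\<^sub>N T + P\<^sub>N\<close> is a bounded
idempotent onto \<open>S\<close> with \<open>I - Q\<close> mapping into \<open>K\<close>, which makes \<open>Q\<close> \<open>A\<close>-selfadjoint, so
\<open>(A,S)\<close> is compatible. Conversely, compatibility gives \<open>H = S + K\<close>; since \<open>M \<inter> K = 0\<close> and
\<open>N \<subseteq> K\<close>, the oblique projection sends \<open>y = s + k\<close> to \<open>P\<^sub>M s\<close>, and \<open>P\<^sub>M T = P\<^sub>{A,M}\<close> holds
precisely when every residual \<open>y - Ty\<close> lies in \<open>K\<close>.\<close>

section \<open>Complex inner product spaces\<close>

lemma scaleC_minus_one: "scaleC (-1) (x::'a::chilbert_space) = - x"
  using scaleR_scaleC[of "-1" x] by simp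

lemma scaleC_zero_right [simp]: "scaleC c (0::'a::chilbert_space) = 0"
proof -
  have "scaleC c (0::'a) = scaleC c 0 + scaleC c 0" using scaleC_add_right[of c "0::'a" 0] by simp
  thus ?thesis by simp
qed

lemma scaleC_minus_right: "scaleC c (- (x::'a::chilbert_space)) = - scaleC c x"
  using scaleC_scaleC[of c "-1" x] scaleC_scaleC[of "-1" c x] by (simp add: scaleC_minus_one)

lemma scaleC_diff_right: "scaleC c (x - (y::'a::chilbert_space)) = scaleC c x - scaleC c y"
  using scaleC_add_right[of c x "-y"] by (simp add: scaleC_minus_right)

lemma cinner_zero_left [simp]: "cinner 0 (y::'a::chilbert_space) = 0"
proof -
  have "cinner (0::'a) y = cinner 0 y + cinner 0 y" using cinner_add_left[of "0::'a" 0 y] by simp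
  thus ?thesis by simp
qed

lemma cinner_zero_right [simp]: "cinner (y::'a::chilbert_space) 0 = 0"
  using cinner_commute[of 0 y] by simp

lemma cinner_add_right: "cinner (x::'a::chilbert_space) (y + z) = cinner x y + cinner x z"
  using cinner_commute[of x "y+z"] cinner_commute[of x y] cinner_commute[of x z]
  by (simp add: cinner_add_left)

lemma cinner_scaleC_right: "cinner (x::'a::chilbert_space) (scaleC c y) = cnj c * cinner x y"
  using cinner_commute[of x "scaleC c y"] cinner_commute[of x y] by (simp add: cinner_scaleC_left)

lemma cinner_minus_left: "cinner (- x) (y::'a::chilbert_space) = - cinner x y"
  using cinner_scaleC_left[of "-1" x y] by (simp add: scaleC_minus_one)

lemma cinner_minus_right: "cinner (y::'a::chilbert_space) (- x) = - cinner y x"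
  using cinner_commute[of y "-x"] cinner_commute[of y x] by (simp add: cinner_minus_left)

lemma cinner_diff_left: "cinner (x - y) (z::'a::chilbert_space) = cinner x z - cinner y z"
  using cinner_add_left[of x "-y" z] by (simp add: cinner_minus_left)

lemma cinner_diff_right: "cinner (z::'a::chilbert_space) (x - y) = cinner z x - cinner z y"
  using cinner_add_right[of z x "-y"] by (simp add: cinner_minus_right)

lemma cinner_scaleR_left: "cinner (scaleR r x) (y::'a::chilbert_space) = scaleR r (cinner x y)"
  by (simp add: cinner_scaleC_left scaleR_conv_of_real scaleR_scaleC)

lemma norm_square_eq_cinner: "(norm (x::'a::chilbert_space))\<^sup>2 = Re (cinner x x)"
  by (simp add: cinner_self_norm)

lemma cinner_self_eq_0: "cinner x x = 0 \<longleftrightarrow> (x::'a::chilbert_space) = 0"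
  by (simp add: cinner_self_norm)

lemma norm_scaleC: "norm (scaleC a (x::'a::chilbert_space)) = cmod a * norm x"
proof -
  have "(norm (scaleC a x))\<^sup>2 = Re (a * cnj a * cinner x x)"
    by (simp add: norm_square_eq_cinner cinner_scaleC_left cinner_scaleC_right
        mult.assoc mult.left_commute)
  also have "\<dots> = (cmod a * norm x)\<^sup>2"
    by (simp add: cinner_self_norm flip: complex_norm_square power_mult_distrib)
  finally show ?thesis by (simp add: power2_eq_iff_nonneg)
qed

lemma norm_add_square_if_orthogonal:
  assumes "cinner u v = 0"
  shows "(norm (u + (v::'a::chilbert_space)))\<^sup>2 = (norm u)\<^sup>2 + (norm v)\<^sup>2"
proof -
  have "cinner v u = 0" using assms cinner_commute[of v u] by simp
  thus ?thesis using assms by (simp add: norm_square_eq_cinner cinner_add_left cinner_add_right)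
qed

lemma parallelogram_law:
  "(norm (u + v))\<^sup>2 + (norm (u - v))\<^sup>2 = 2 * (norm u)\<^sup>2 + 2 * (norm (v::'a::chilbert_space))\<^sup>2"
  by (simp add: norm_square_eq_cinner cinner_add_left cinner_add_right
      cinner_diff_left cinner_diff_right)

lemma norm_diff_square_midpoint:
  "4 * (norm (x - scaleR (1/2) (a + b)))\<^sup>2 + (norm (a - b))\<^sup>2 =
     2 * (norm (x - a))\<^sup>2 + 2 * (norm (x - (b::'a::chilbert_space)))\<^sup>2"
proof -
  have "(x - a) + (x - b) = scaleR 2 (x - scaleR (1/2) (a + b))"
    by (simp add: scaleR_right_diff_distrib algebra_simps scaleR_2)
  hence "(norm ((x - a) + (x - b)))\<^sup>2 = 4 * (norm (x - scaleR (1/2) (a + b)))\<^sup>2"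
    by (simp add: power2_eq_square)
  thus ?thesis using parallelogram_law[of "x - a" "x - b"] by (simp add: norm_minus_commute)
qed

lemma norm_cinner_le: "cmod (cinner x y) \<le> norm (x::'a::chilbert_space) * norm y"
proof (cases "y = 0")
  case True thus ?thesis by simp
next
  case False
  define c where "c = cinner x y"
  define p where "p = scaleC (c / cinner y y) y"
  have yy: "cinner y y \<noteq> 0" using False cinner_self_eq_0 by blast
  have "cinner (x - p) p = cnj (c / cinner y y) * (c - c / cinner y y * cinner y y)"
    by (simp add: p_def c_def cinner_diff_left cinner_scaleC_right cinner_scaleC_left algebra_simps)
  hence "cinner (x - p) p = 0" using yy by simp
  hence "(norm x)\<^sup>2 = (norm (x - p))\<^sup>2 + (norm p)\<^sup>2"
    using norm_add_square_if_orthogonal[of "x - p" p] by simp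
  hence "(norm p)\<^sup>2 \<le> (norm x)\<^sup>2" by simp
  hence "norm p \<le> norm x" using power2_le_imp_le norm_ge_zero by blast
  moreover have "norm p = cmod c / norm y"
  proof -
    have "cmod (cinner y y) = (norm y)\<^sup>2" unfolding cinner_self_norm norm_of_real by simp
    thus ?thesis using False by (simp add: p_def norm_scaleC norm_divide power2_eq_square)
  qed
  moreover have "0 < norm y" using False by simp
  ultimately show ?thesis by (simp add: c_def pos_divide_le_eq)
qed

lemma bounded_linear_cinner_left: "bounded_linear (\<lambda>x. cinner (x::'a::chilbert_space) y)"
  by (rule bounded_linear_intro[where K="norm y"])
     (simp_all add: cinner_add_left cinner_scaleR_left norm_cinner_le)

section \<open>Bounded operators and closed subspaces\<close>

lemma bounded_clinear_iff:
  "bounded_clinear (T::'a::chilbert_space \<Rightarrow> 'a) \<longleftrightarrow>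
     bounded_linear T \<and> (\<forall>c x. T (scaleC c x) = scaleC c (T x))"
proof
  assume a: "bounded_clinear T"
  then obtain K where K: "\<forall>x. norm (T x) \<le> norm x * K" unfolding bounded_clinear_def by blast
  have "bounded_linear T"
    by (rule bounded_linear_intro[where K=K])
       (use a K in \<open>auto simp: bounded_clinear_def scaleR_scaleC\<close>)
  thus "bounded_linear T \<and> (\<forall>c x. T (scaleC c x) = scaleC c (T x))"
    using a unfolding bounded_clinear_def by blast
next
  assume a: "bounded_linear T \<and> (\<forall>c x. T (scaleC c x) = scaleC c (T x))"
  hence "\<exists>K. \<forall>x. norm (T x) \<le> norm x * K" using bounded_linear.bounded by blast
  thus "bounded_clinear T" using a unfolding bounded_clinear_def
    by (simp add: bounded_linear.axioms(1) linear_add)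
qed

lemma bounded_clinear_add: "bounded_clinear T \<Longrightarrow> T (x + y) = T x + T y"
  unfolding bounded_clinear_def by blast

lemma bounded_clinear_scaleC: "bounded_clinear T \<Longrightarrow> T (scaleC c x) = scaleC c (T x)"
  unfolding bounded_clinear_def by blast

lemma bounded_clinear_imp_bounded_linear: "bounded_clinear T \<Longrightarrow> bounded_linear T"
  using bounded_clinear_iff by blast

lemma bounded_clinear_diff: "bounded_clinear T \<Longrightarrow> T (x - y) = T x - T y"
  using bounded_clinear_imp_bounded_linear linear_diff bounded_linear.axioms(1) by blast

lemma bounded_clinear_zero: "bounded_clinear T \<Longrightarrow> T 0 = 0"
  using bounded_clinear_imp_bounded_linear linear_0 bounded_linear.axioms(1) by blast

lemma closed_csubspace_zero: "closed_csubspace S \<Longrightarrow> 0 \<in> S"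
  unfolding closed_csubspace_def by blast

lemma closed_csubspace_add: "closed_csubspace S \<Longrightarrow> x \<in> S \<Longrightarrow> y \<in> S \<Longrightarrow> x + y \<in> S"
  unfolding closed_csubspace_def by blast

lemma closed_csubspace_scaleC: "closed_csubspace S \<Longrightarrow> x \<in> S \<Longrightarrow> scaleC c x \<in> S"
  unfolding closed_csubspace_def by blast

lemma closed_csubspace_diff: "closed_csubspace S \<Longrightarrow> x \<in> S \<Longrightarrow> y \<in> S \<Longrightarrow> x - y \<in> S"
  using closed_csubspace_add[of S x "-y"] closed_csubspace_scaleC[of S y "-1"]
  by (simp add: scaleC_minus_one)

lemma closed_csubspace_scaleR: "closed_csubspace S \<Longrightarrow> x \<in> S \<Longrightarrow> scaleR r x \<in> S"
  by (simp add: closed_csubspace_scaleC scaleR_scaleC)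

lemma closed_csubspace_Int:
  "closed_csubspace S \<Longrightarrow> closed_csubspace T \<Longrightarrow> closed_csubspace (S \<inter> T)"
  unfolding closed_csubspace_def by (simp add: closed_Int)

lemma closed_zero_set_bounded_linear: "bounded_linear f \<Longrightarrow> closed {x. f x = 0}"
  by (rule closed_Collect_eq) (simp_all add: linear_continuous_on)

lemma closed_csubspace_orth: "closed_csubspace (orth (M::'a::chilbert_space set))"
proof -
  have "orth M = (\<Inter>y\<in>M. {x. cinner x y = 0})" unfolding orth_def by auto
  moreover have "closed (\<Inter>y\<in>M. {x. cinner x y = (0::complex)})"
    using closed_zero_set_bounded_linear[OF bounded_linear_cinner_left] by blast
  ultimately show ?thesis unfolding closed_csubspace_def orth_def
    by (auto simp: cinner_add_left cinner_scaleC_left)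
qed

lemma closed_csubspace_nullspace: "bounded_clinear A \<Longrightarrow> closed_csubspace (nullspace A)"
  unfolding closed_csubspace_def nullspace_def
  using closed_zero_set_bounded_linear[OF bounded_clinear_imp_bounded_linear]
  by (auto simp: bounded_clinear_add bounded_clinear_scaleC bounded_clinear_zero)

lemma orth_cinner_eq_0: "x \<in> orth M \<Longrightarrow> y \<in> M \<Longrightarrow> cinner y x = 0"
  unfolding orth_def using cinner_commute[of y x] by force

section \<open>Positive operators\<close>

text \<open>Polarisation: the form \<open>\<langle>A x, x\<rangle>\<close> is real, and it determines \<open>\<langle>A x, y\<rangle>\<close> from its
values at \<open>x + y\<close> and \<open>x + i y\<close>.\<close>
lemma positive_op_cinner_sym:
  assumes "positive_op A"
  shows "cinner (A x) y = cinner x (A (y::'a::chilbert_space))"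
proof -
  have A: "bounded_clinear A" using assms positive_op_def by blast
  have diag: "cinner (A z) z = cinner z (A z)" for z
  proof -
    have "Im (cinner (A z) z) = 0" using assms positive_op_def by blast
    thus ?thesis using cinner_commute[of z "A z"] by (simp add: complex_eq_iff)
  qed
  define a where "a = cinner (A x) y"
  define b where "b = cinner (A y) x"
  define c where "c = cinner x (A y)"
  define d where "d = cinner y (A x)"
  have "a + b = c + d"
    using diag[of "x + y"] diag[of x] diag[of y]
    by (simp add: bounded_clinear_add[OF A] cinner_add_left cinner_add_right
        a_def b_def c_def d_def algebra_simps)
  moreover have "- (\<i> * a) + \<i> * b = - (\<i> * c) + \<i> * d"
    using diag[of "x + scaleC \<i> y"] diag[of x] diag[of y]
    by (simp add: bounded_clinear_add[OF A] bounded_clinear_scaleC[OF A] cinner_add_left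
        cinner_add_right cinner_scaleC_left cinner_scaleC_right a_def b_def c_def d_def algebra_simps)
  hence "\<i> * (b - a) = \<i> * (d - c)" by (simp add: algebra_simps)
  hence "b - a = d - c" by simp
  ultimately have "(a + b) - (b - a) = (c + d) - (d - c)" by simp
  hence "a = c" by simp
  thus ?thesis by (simp add: a_def c_def)
qed

lemma positive_op_id: "positive_op (id :: 'a::chilbert_space \<Rightarrow> 'a)"
  unfolding positive_op_def bounded_clinear_def
  by (auto simp: cinner_self_norm intro: exI[where x=1])

text \<open>The test point is \<open>t = \<langle>A e, s\<rangle> / (\<langle>A s, s\<rangle> + 1)\<close>.\<close>
lemma cinner_eq_0_if_A_minimal:
  assumes pos: "positive_op A"
    and min: "\<And>t. Re (cinner (A e) e) \<le>
               Re (cinner (A (e - scaleC t s)) (e - scaleC t (s::'a::chilbert_space)))"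
  shows "cinner (A e) s = 0"
proof -
  have A: "bounded_clinear A" using pos positive_op_def by blast
  define c where "c = cinner (A e) s"
  define q where "q = Re (cinner (A s) s)"
  have q0: "q \<ge> 0" using pos positive_op_def q_def by blast
  have qq: "cinner (A s) s = of_real q"
    using pos unfolding positive_op_def q_def by (simp add: complex_eq_iff)
  have cs: "cinner (A s) e = cnj c"
    using positive_op_cinner_sym[OF pos, of s e] cinner_commute[of e "A s"] c_def
      positive_op_cinner_sym[OF pos, of e s] by simp
  have expand: "cinner (A (e - scaleC t s)) (e - scaleC t s) =
      cinner (A e) e - cnj t * c - t * cnj c + t * cnj t * of_real q" for t
    by (simp add: bounded_clinear_diff[OF A] bounded_clinear_scaleC[OF A] cinner_diff_left
        cinner_diff_right cinner_scaleC_left cinner_scaleC_right c_def[symmetric] cs qq algebra_simps)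
  define k where "k = (cmod c)\<^sup>2"
  define \<sigma> where "\<sigma> = 1 / (q + 1)"
  have \<sigma>: "\<sigma> > 0" "\<sigma> * q < 2" using q0 by (simp_all add: \<sigma>_def field_simps)
  have cc: "c * cnj c = of_real k" unfolding k_def by (rule complex_norm_square[symmetric])
  have "cinner (A (e - scaleC (of_real \<sigma> * c) s)) (e - scaleC (of_real \<sigma> * c) s)
      = cinner (A e) e - 2 * of_real \<sigma> * (c * cnj c) + of_real \<sigma> * of_real \<sigma> * (c * cnj c) * of_real q"
    unfolding expand by (simp add: algebra_simps)
  also have "\<dots> = cinner (A e) e + of_real (\<sigma> * k * (\<sigma> * q - 2))"
    unfolding cc by (simp add: algebra_simps)
  finally have "cinner (A (e - scaleC (of_real \<sigma> * c) s)) (e - scaleC (of_real \<sigma> * c) s)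
      = cinner (A e) e + of_real (\<sigma> * k * (\<sigma> * q - 2))" .
  hence "0 \<le> \<sigma> * k * (\<sigma> * q - 2)" using min[of "of_real \<sigma> * c"] by simp
  moreover have "k \<ge> 0" by (simp add: k_def)
  ultimately have "k = 0" using \<sigma> by (smt (verit, best) mult_pos_neg mult_pos_pos)
  thus ?thesis by (simp add: k_def c_def)
qed

lemma positive_op_eq_0_if_cinner_eq_0:
  assumes pos: "positive_op A" and "cinner (A x) x = 0"
  shows "A x = (0::'a::chilbert_space)"
proof -
  have "cinner (A x) s = 0" for s
  proof (rule cinner_eq_0_if_A_minimal[OF pos])
    fix t
    show "Re (cinner (A x) x) \<le> Re (cinner (A (x - scaleC t s)) (x - scaleC t s))"
      using assms unfolding positive_op_def by simp
  qed
  from this[of "A x"] show ?thesis by (simp only: cinner_self_eq_0)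
qed

section \<open>Orthogonal projections and adjoints\<close>

lemma minimizing_sequence_Cauchy:
  assumes M: "closed_csubspace M" and f: "\<And>n. f n \<in> M"
    and low: "\<And>m. m \<in> M \<Longrightarrow> d \<le> (norm (x - m))\<^sup>2"
    and approx: "\<And>n. (norm (x - f n))\<^sup>2 < d + inverse (real (Suc n))"
  shows "Cauchy (f :: nat \<Rightarrow> 'a::chilbert_space)"
proof (rule CauchyI)
  have mid: "(norm (a - b))\<^sup>2 \<le> 2 * (norm (x - a))\<^sup>2 + 2 * (norm (x - b))\<^sup>2 - 4 * d"
    if "a \<in> M" "b \<in> M" for a b
    using low[OF closed_csubspace_scaleR[where r="1/2", OF M closed_csubspace_add[OF M that]]]
      norm_diff_square_midpoint[of x a b] by linarith
  fix e :: real assume e: "0 < e"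
  obtain N where N: "inverse (real (Suc N)) < e\<^sup>2 / 4"
    using reals_Archimedean[of "e\<^sup>2/4"] e by auto
  have "norm (f m - f n) < e" if "m \<ge> N" "n \<ge> N" for m n
  proof -
    have "inverse (real (Suc m)) \<le> inverse (real (Suc N))"
         "inverse (real (Suc n)) \<le> inverse (real (Suc N))"
      using that by (simp_all add: le_imp_inverse_le)
    moreover note mid[OF f f, of m n] approx[of m] approx[of n]
    ultimately have "(norm (f m - f n))\<^sup>2 < 4 * inverse (real (Suc N))"
      by (smt (verit))
    also have "\<dots> < e\<^sup>2" using N by (simp add: field_simps)
    finally show ?thesis using e by (simp add: power_less_imp_less_base)
  qed
  thus "\<exists>M. \<forall>m\<ge>M. \<forall>n\<ge>M. norm (f m - f n) < e" by blast
qed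

lemma closest_point_exists:
  assumes M: "closed_csubspace M"
  shows "\<exists>p\<in>M. \<forall>m\<in>M. (norm (x - p))\<^sup>2 \<le> (norm (x - m::'a::chilbert_space))\<^sup>2"
proof -
  define D where "D = (\<lambda>m. (norm (x - m))\<^sup>2) ` M"
  define d where "d = Inf D"
  have ne: "D \<noteq> {}" using closed_csubspace_zero[OF M] D_def by blast
  have bb: "bdd_below D" unfolding D_def by (rule bdd_belowI[where m=0]) auto
  have low: "d \<le> (norm (x - m))\<^sup>2" if "m \<in> M" for m
    unfolding d_def using cInf_lower[OF _ bb] that D_def by blast
  have "\<exists>m\<in>M. (norm (x - m))\<^sup>2 < d + inverse (real (Suc n))" for n
  proof -
    have "Inf D < d + inverse (real (Suc n))" by (simp add: d_def)
    then obtain y where "y \<in> D" "y < d + inverse (real (Suc n))"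
      using cInf_less_iff[OF ne bb] by blast
    thus ?thesis unfolding D_def by blast
  qed
  then obtain f where f: "\<And>n. f n \<in> M" "\<And>n. (norm (x - f n))\<^sup>2 < d + inverse (real (Suc n))"
    by metis
  then obtain p where p: "f \<longlonglongrightarrow> p"
    using minimizing_sequence_Cauchy[OF M _ low] Cauchy_convergent_iff convergent_def by blast
  have "closed M" using M closed_csubspace_def by blast
  hence pM: "p \<in> M" using closed_sequentially f(1) p by blast
  have "(norm (x - p))\<^sup>2 \<le> d"
  proof (rule LIMSEQ_le)
    show "(\<lambda>n. (norm (x - f n))\<^sup>2) \<longlonglongrightarrow> (norm (x - p))\<^sup>2"
      by (intro tendsto_intros p)
    show "(\<lambda>n. d + inverse (real (Suc n))) \<longlonglongrightarrow> d"
      using tendsto_add[OF tendsto_const LIMSEQ_inverse_real_of_nat, of d] by simp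
    show "\<exists>N. \<forall>n\<ge>N. (norm (x - f n))\<^sup>2 \<le> d + inverse (real (Suc n))"
      using f(2) less_imp_le by blast
  qed
  thus ?thesis using pM low by (meson order_trans)
qed

lemma orth_decomposition_exists:
  assumes M: "closed_csubspace M"
  shows "\<exists>p\<in>M. x - p \<in> orth (M::'a::chilbert_space set)"
proof -
  obtain p where pM: "p \<in> M" and closest: "\<And>m. m \<in> M \<Longrightarrow> (norm (x - p))\<^sup>2 \<le> (norm (x - m))\<^sup>2"
    using closest_point_exists[OF M, of x] by blast
  have "cinner (id (x - p)) s = 0" if s: "s \<in> M" for s
  proof (rule cinner_eq_0_if_A_minimal[OF positive_op_id])
    fix t
    have "p + scaleC t s \<in> M"
      using closed_csubspace_add[OF M pM closed_csubspace_scaleC[OF M s]] .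
    from closest[OF this] show "Re (cinner (id (x - p)) (x - p)) \<le>
        Re (cinner (id (x - p - scaleC t s)) (x - p - scaleC t s))"
      by (simp add: norm_square_eq_cinner algebra_simps)
  qed
  thus ?thesis using pM unfolding orth_def by auto
qed

lemma orth_decomposition_unique:
  assumes M: "closed_csubspace M" and "p \<in> M" "x - p \<in> orth M" "q \<in> M" "x - q \<in> orth M"
  shows "p = (q::'a::chilbert_space)"
proof -
  have "p - q \<in> M" using closed_csubspace_diff[OF M assms(2) assms(4)] .
  moreover have "(x - q) - (x - p) \<in> orth M"
    using closed_csubspace_diff[OF closed_csubspace_orth assms(5) assms(3)] .
  ultimately have "cinner (p - q) (p - q) = 0" unfolding orth_def by simp
  thus ?thesis by (simp add: cinner_self_eq_0)
qed

lemma orth_proj_eq: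
  assumes M: "closed_csubspace M" and "p \<in> M" "x - p \<in> orth M"
  shows "orth_proj M x = (p::'a::chilbert_space)"
  unfolding orth_proj_def by (rule the_equality) (use assms orth_decomposition_unique in blast)+

lemma orth_proj:
  assumes M: "closed_csubspace M"
  shows "orth_proj M x \<in> M" "x - orth_proj M x \<in> orth (M::'a::chilbert_space set)"
  using orth_decomposition_exists[OF M, of x] orth_proj_eq[OF M] by auto

lemma bounded_clinear_orth_proj:
  assumes M: "closed_csubspace M"
  shows "bounded_clinear (orth_proj (M::'a::chilbert_space set))"
proof -
  note P = orth_proj[OF M]
  have "orth_proj M (x + y) = orth_proj M x + orth_proj M y" for x y
  proof (rule orth_proj_eq[OF M])
    show "orth_proj M x + orth_proj M y \<in> M" by (rule closed_csubspace_add[OF M P(1) P(1)])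
    have "x + y - (orth_proj M x + orth_proj M y) = (x - orth_proj M x) + (y - orth_proj M y)"
      by simp
    thus "x + y - (orth_proj M x + orth_proj M y) \<in> orth M"
      using closed_csubspace_add[OF closed_csubspace_orth P(2) P(2)] by metis
  qed
  moreover have "orth_proj M (scaleC c x) = scaleC c (orth_proj M x)" for c x
  proof (rule orth_proj_eq[OF M])
    show "scaleC c (orth_proj M x) \<in> M" by (rule closed_csubspace_scaleC[OF M P(1)])
    show "scaleC c x - scaleC c (orth_proj M x) \<in> orth M"
      using closed_csubspace_scaleC[OF closed_csubspace_orth P(2)] by (simp add: scaleC_diff_right)
  qed
  moreover have "norm (orth_proj M x) \<le> norm x * 1" for x
  proof -
    have "cinner (orth_proj M x) (x - orth_proj M x) = 0" by (rule orth_cinner_eq_0[OF P(2) P(1)])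
    from norm_add_square_if_orthogonal[OF this]
    have "(norm (orth_proj M x))\<^sup>2 \<le> (norm x)\<^sup>2" by simp
    thus ?thesis using power2_le_imp_le by simp
  qed
  ultimately show ?thesis unfolding bounded_clinear_def by blast
qed

text \<open>The representer is a multiple of the component \<open>w\<close>, orthogonal to the kernel, of any
point where \<open>x \<mapsto> \<langle>Q x, y\<rangle>\<close> does not vanish.\<close>
lemma cinner_representation:
  assumes Q: "bounded_clinear (Q::'a::chilbert_space \<Rightarrow> 'a)"
  shows "\<exists>z. \<forall>x. cinner (Q x) y = cinner x z"
proof -
  define f where "f x = cinner (Q x) y" for x
  have fadd: "f (u + v) = f u + f v" for u v
    by (simp add: f_def bounded_clinear_add[OF Q] cinner_add_left)
  have fdiff: "f (u - v) = f u - f v" for u v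
    by (simp add: f_def bounded_clinear_diff[OF Q] cinner_diff_left)
  have fsc: "f (scaleC c u) = c * f u" for c u
    by (simp add: f_def bounded_clinear_scaleC[OF Q] cinner_scaleC_left)
  have f0: "f 0 = 0" by (simp add: f_def bounded_clinear_zero[OF Q])
  define K where "K = {x. f x = 0}"
  have "bounded_linear f" unfolding f_def
    using bounded_linear_compose[OF bounded_linear_cinner_left
        bounded_clinear_imp_bounded_linear[OF Q]] by (simp add: o_def)
  hence K: "closed_csubspace K"
    unfolding closed_csubspace_def K_def
    using closed_zero_set_bounded_linear by (auto simp: fadd fsc f0)
  show ?thesis
  proof (cases "\<forall>x. f x = 0")
    case True thus ?thesis by (intro exI[where x=0]) (simp add: f_def)
  next
    case False
    then obtain x0 where x0: "f x0 \<noteq> 0" by blast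
    define w where "w = x0 - orth_proj K x0"
    have wK: "w \<in> orth K" using orth_proj(2)[OF K] w_def by simp
    have fw: "f w = f x0" using orth_proj(1)[OF K, of x0] by (simp add: w_def fdiff K_def)
    hence "w \<noteq> 0" using x0 f0 by auto
    hence "cinner w w \<noteq> 0" by (simp add: cinner_self_eq_0)
    have "f x = cinner x (scaleC (cnj (f w / cinner w w)) w)" for x
    proof -
      define u where "u = scaleC (f x) w - scaleC (f w) x"
      have "f u = 0" by (simp add: u_def fdiff fsc)
      hence "cinner u w = 0" using orth_cinner_eq_0[OF wK] by (simp add: K_def)
      hence "f x * cinner w w = f w * cinner x w"
        by (simp add: u_def cinner_diff_left cinner_scaleC_left)
      hence "f x = f w * cinner x w / cinner w w"
        using \<open>cinner w w \<noteq> 0\<close> by (simp add: field_simps)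
      thus ?thesis by (simp add: cinner_scaleC_right)
    qed
    thus ?thesis unfolding f_def by blast
  qed
qed

lemma adjoint_exists:
  assumes "bounded_clinear (Q::'a::chilbert_space \<Rightarrow> 'a)"
  shows "\<exists>Qs. is_adjoint Q Qs"
proof -
  have "\<forall>y. \<exists>z. \<forall>x. cinner (Q x) y = cinner x z" using cinner_representation[OF assms] by blast
  then obtain Qs where "\<And>y x. cinner (Q x) y = cinner x (Qs y)" by metis
  thus ?thesis unfolding is_adjoint_def by blast
qed

lemma oblique_proj_eq:
  assumes M: "closed_csubspace M" and K: "closed_csubspace K" and MK: "M \<inter> K \<subseteq> {0}"
    and "m \<in> M" "y - m \<in> K"
  shows "oblique_proj M K y = (m::'a::chilbert_space)"
  unfolding oblique_proj_def
proof (rule the_equality)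
  fix m' assume m': "m' \<in> M \<and> y - m' \<in> K"
  have "m' - m \<in> M" using closed_csubspace_diff[OF M] m' assms(4) by blast
  moreover have "(y - m) - (y - m') \<in> K" using closed_csubspace_diff[OF K] m' assms(5) by blast
  ultimately have "m' - m \<in> M \<inter> K" by simp
  thus "m' = m" using MK by auto
qed (use assms in blast)

section \<open>\<open>A\<close>-projections and compatibility\<close>

locale positive_op_subspace_pair =
  fixes A :: "'a::chilbert_space \<Rightarrow> 'a" and S :: "'a set"
  assumes positive: "positive_op A" and subspace: "closed_csubspace S"
begin

lemma bounded_clinear_A: "bounded_clinear A"
  using positive positive_op_def by blast

lemma mem_orth_image_iff: "x \<in> orth (A ` S) \<longleftrightarrow> (\<forall>s\<in>S. cinner (A x) s = 0)"
  unfolding orth_def using positive_op_cinner_sym[OF positive] by auto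

lemma null_part_subset_orth_image: "S \<inter> nullspace A \<subseteq> orth (A ` S)"
  by (auto simp: mem_orth_image_iff nullspace_def)

lemma regular_part_Int_orth_image: "odiff S (S \<inter> nullspace A) \<inter> orth (A ` S) \<subseteq> {0}"
proof
  fix x assume "x \<in> odiff S (S \<inter> nullspace A) \<inter> orth (A ` S)"
  hence xS: "x \<in> S" and xN: "x \<in> orth (S \<inter> nullspace A)" and xK: "x \<in> orth (A ` S)"
    unfolding odiff_def by auto
  have "cinner (A x) x = 0" using xK xS mem_orth_image_iff by blast
  hence "x \<in> S \<inter> nullspace A"
    using xS positive_op_eq_0_if_cinner_eq_0[OF positive] by (simp add: nullspace_def)
  hence "cinner x x = 0" using xN unfolding orth_def by blast
  thus "x \<in> {0}" by (simp add: cinner_self_eq_0)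
qed

lemma closed_csubspace_null_part: "closed_csubspace (S \<inter> nullspace A)"
  by (rule closed_csubspace_Int[OF subspace closed_csubspace_nullspace[OF bounded_clinear_A]])

lemma closed_csubspace_regular_part: "closed_csubspace (odiff S (S \<inter> nullspace A))"
  unfolding odiff_def by (rule closed_csubspace_Int[OF subspace closed_csubspace_orth])

lemma orth_proj_regular_part:
  assumes "s \<in> S"
  shows "orth_proj (odiff S (S \<inter> nullspace A)) s = s - orth_proj (S \<inter> nullspace A) s"
proof (rule orth_proj_eq[OF closed_csubspace_regular_part])
  note P = orth_proj[OF closed_csubspace_null_part, of s]
  show "s - orth_proj (S \<inter> nullspace A) s \<in> odiff S (S \<inter> nullspace A)"
    using closed_csubspace_diff[OF subspace assms] P unfolding odiff_def by blast
  have "cinner (orth_proj (S \<inter> nullspace A) s) m = 0" if "m \<in> odiff S (S \<inter> nullspace A)" for m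
    using that P(1) orth_cinner_eq_0 unfolding odiff_def by blast
  thus "s - (s - orth_proj (S \<inter> nullspace A) s) \<in> orth (odiff S (S \<inter> nullspace A))"
    by (simp add: orth_def)
qed

text \<open>Any decomposition \<open>y = s + k\<close> with \<open>s \<in> S\<close>, \<open>k \<in> A(S)\<^sup>\<perp>\<close> determines the oblique
projection, because the \<open>S \<inter> N(A)\<close>-component of \<open>s\<close> can be moved into \<open>k\<close>.\<close>
lemma oblique_proj_eq_orth_proj:
  assumes "s \<in> S" "y - s \<in> orth (A ` S)"
  shows "oblique_proj (odiff S (S \<inter> nullspace A)) (orth (A ` S)) y =
         orth_proj (odiff S (S \<inter> nullspace A)) s"
proof (rule oblique_proj_eq[OF closed_csubspace_regular_part closed_csubspace_orth
      regular_part_Int_orth_image])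
  let ?p = "orth_proj (S \<inter> nullspace A) s"
  have "?p \<in> orth (A ` S)" using orth_proj(1)[OF closed_csubspace_null_part] null_part_subset_orth_image by blast
  hence "?p + (y - s) \<in> orth (A ` S)" using closed_csubspace_add[OF closed_csubspace_orth] assms by blast
  thus "y - orth_proj (odiff S (S \<inter> nullspace A)) s \<in> orth (A ` S)"
    by (simp add: orth_proj_regular_part[OF assms(1)] algebra_simps)
qed (rule orth_proj(1)[OF closed_csubspace_regular_part])

text \<open>For \<open>s \<in> S\<close> and \<open>e \<in> A(S)\<^sup>\<perp>\<close> the cross terms vanish, so
\<open>\<parallel>e + s\<parallel>\<^sub>A\<^sup>2 = \<parallel>e\<parallel>\<^sub>A\<^sup>2 + \<parallel>s\<parallel>\<^sub>A\<^sup>2\<close>; conversely minimality forces the first-order condition.\<close>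
lemma A_projection_iff_residual_orth:
  assumes T: "range T \<subseteq> S"
  shows "is_A_projection A S T \<longleftrightarrow> (\<forall>y. y - T y \<in> orth (A ` S))"
proof
  assume AP: "is_A_projection A S T"
  show "\<forall>y. y - T y \<in> orth (A ` S)"
  proof
    fix y
    have "cinner (A (y - T y)) s = 0" if s: "s \<in> S" for s
    proof (rule cinner_eq_0_if_A_minimal[OF positive])
      fix t
      have "T y + scaleC t s \<in> S"
        using closed_csubspace_add[OF subspace _ closed_csubspace_scaleC[OF subspace s]] T by blast
      hence "normA A (y - T y) \<le> normA A (y - (T y + scaleC t s))"
        using AP unfolding is_A_projection_def by blast
      thus "Re (cinner (A (y - T y)) (y - T y)) \<le>
            Re (cinner (A (y - T y - scaleC t s)) (y - T y - scaleC t s))"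
        unfolding normA_def by (simp add: algebra_simps)
    qed
    thus "y - T y \<in> orth (A ` S)" unfolding mem_orth_image_iff by blast
  qed
next
  assume res: "\<forall>y. y - T y \<in> orth (A ` S)"
  have "normA A (y - T y) \<le> normA A (y - s)" if s: "s \<in> S" for y s
  proof -
    define e where "e = y - T y"
    define w where "w = T y - s"
    have "w \<in> S" unfolding w_def using closed_csubspace_diff[OF subspace _ s] T by blast
    hence ew: "cinner (A e) w = 0" using res mem_orth_image_iff e_def by blast
    hence we: "cinner (A w) e = 0"
      using positive_op_cinner_sym[OF positive, of w e] cinner_commute[of w "A e"] by simp
    have "y - s = e + w" by (simp add: e_def w_def)
    hence "Re (cinner (A (y - s)) (y - s)) = Re (cinner (A e) e) + Re (cinner (A w) w)"
      using ew we by (simp add: bounded_clinear_add[OF bounded_clinear_A] cinner_add_left cinner_add_right)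
    moreover have "Re (cinner (A w) w) \<ge> 0" using positive positive_op_def by blast
    ultimately show ?thesis unfolding normA_def e_def by simp
  qed
  thus "is_A_projection A S T" unfolding is_A_projection_def using T by blast
qed

lemma compatible_imp_decomposition:
  assumes "compatible A S"
  shows "\<exists>s\<in>S. y - s \<in> orth (A ` S)"
proof -
  obtain Q Qs where Q: "bounded_clinear Q" and adj: "is_adjoint Q Qs" and QQ: "Q \<circ> Q = Q"
    and rQ: "range Q = S" and AQ: "A \<circ> Q = Qs \<circ> A"
    using assms unfolding compatible_def by blast
  have "cinner (y - Q y) (A s) = 0" if "s \<in> S" for s
  proof -
    obtain s' where s': "s = Q s'" using \<open>s \<in> S\<close> rQ by blast
    have "cinner (y - Q y) (A s) = cinner (Q (y - Q y)) (A s')"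
      using AQ s' adj unfolding is_adjoint_def by (metis comp_apply)
    also have "Q (y - Q y) = 0" using QQ bounded_clinear_diff[OF Q] by (metis comp_apply diff_self)
    finally show ?thesis by simp
  qed
  thus ?thesis using rQ unfolding orth_def by blast
qed

text \<open>An idempotent \<open>Q\<close> onto \<open>S\<close> whose complementary projection maps into \<open>A(S)\<^sup>\<perp>\<close>
satisfies \<open>\<langle>A z, Q x\<rangle> = \<langle>A Q z, Q x\<rangle>\<close>, and this makes \<open>A Q = Q\<^sup>* A\<close>.\<close>
lemma compatible_if_idempotent:
  assumes Q: "bounded_clinear Q" and QQ: "Q \<circ> Q = Q" and rQ: "range Q = S"
    and res: "\<And>x. x - Q x \<in> orth (A ` S)"
  shows "compatible A S"
proof -
  obtain Qs where adj: "is_adjoint Q Qs" using adjoint_exists[OF Q] by blast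
  note A_sym = positive_op_cinner_sym[OF positive]
  have shift: "cinner (A z) (Q x) = cinner (A (Q z)) (Q x)" for z x
  proof -
    have "cinner (A (z - Q z)) (Q x) = 0" using res[of z] rQ mem_orth_image_iff by blast
    thus ?thesis by (simp add: bounded_clinear_diff[OF bounded_clinear_A] cinner_diff_left)
  qed
  have "cinner (A (Q x)) z = cinner (Qs (A x)) z" for x z
  proof -
    have "cinner (A (Q x)) z = cinner (Q x) (A z)" by (rule A_sym)
    also have "\<dots> = cnj (cinner (A z) (Q x))" by (rule cinner_commute)
    also have "\<dots> = cnj (cinner (A (Q z)) (Q x))" by (simp only: shift[of z x])
    also have "\<dots> = cinner (Q x) (A (Q z))" by (rule cinner_commute[symmetric])
    also have "\<dots> = cinner (A (Q x)) (Q z)" by (rule A_sym[symmetric])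
    also have "\<dots> = cinner (A x) (Q z)" by (rule shift[symmetric])
    also have "\<dots> = cnj (cinner (Q z) (A x))" by (rule cinner_commute)
    also have "\<dots> = cnj (cinner z (Qs (A x)))" using adj unfolding is_adjoint_def by simp
    also have "\<dots> = cinner (Qs (A x)) z" by (rule cinner_commute[symmetric])
    finally show ?thesis .
  qed
  hence "A (Q x) = Qs (A x)" for x
    using cinner_self_eq_0[of "A (Q x) - Qs (A x)"] by (simp add: cinner_diff_left)
  hence "A \<circ> Q = Qs \<circ> A" by auto
  thus ?thesis unfolding compatible_def using Q adj QQ rQ by (intro exI[where x=Q] exI[where x=Qs]) auto
qed

text \<open>The idempotent is \<open>Q = T - P\<^sub>N T + P\<^sub>N\<close>: on \<open>S\<close> both \<open>T\<close> and the identity agree with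
\<open>P\<^sub>{S\<ominus>N}\<close> after removing the \<open>N\<close>-component.\<close>
lemma compatible_if_residual_orth:
  assumes T: "bounded_clinear T" "range T \<subseteq> S" and res: "\<And>y. y - T y \<in> orth (A ` S)"
  shows "compatible A S"
proof -
  define P where "P = orth_proj (S \<inter> nullspace A)"
  have P: "bounded_clinear P"
    unfolding P_def by (rule bounded_clinear_orth_proj[OF closed_csubspace_null_part])
  have PN: "P y \<in> S \<inter> nullspace A" for y
    unfolding P_def by (rule orth_proj(1)[OF closed_csubspace_null_part])
  have PK: "P y \<in> orth (A ` S)" for y using PN null_part_subset_orth_image by blast
  have TS: "T y \<in> S" for y using T(2) by blast
  define Q where "Q y = T y - P (T y) + P y" for y
  have "bounded_linear Q"
    unfolding Q_def using P T(1)
    by (intro bounded_linear_add bounded_linear_sub bounded_linear_compose[of P T]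
        bounded_clinear_imp_bounded_linear)
  moreover have "Q (scaleC c x) = scaleC c (Q x)" for c x
    unfolding Q_def
    by (simp add: bounded_clinear_scaleC[OF T(1)] bounded_clinear_scaleC[OF P]
        scaleC_add_right scaleC_diff_right)
  ultimately have Q: "bounded_clinear Q" using bounded_clinear_iff by blast
  have QS: "Q y \<in> S" for y
    unfolding Q_def using PN TS
    by (intro closed_csubspace_add[OF subspace] closed_csubspace_diff[OF subspace]) auto
  have Qid: "Q s = s" if s: "s \<in> S" for s
  proof -
    have "s - s \<in> orth (A ` S)" using closed_csubspace_zero[OF closed_csubspace_orth] by simp
    hence "orth_proj (odiff S (S \<inter> nullspace A)) (T s) = orth_proj (odiff S (S \<inter> nullspace A)) s"
      using oblique_proj_eq_orth_proj[OF TS res] oblique_proj_eq_orth_proj[OF s] by simp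
    hence "T s - P (T s) = s - P s"
      unfolding P_def orth_proj_regular_part[OF TS] orth_proj_regular_part[OF s] .
    thus ?thesis by (simp add: Q_def)
  qed
  have "x - Q x \<in> orth (A ` S)" for x
  proof -
    have e: "x - Q x = x - T x + P (T x) - P x" by (simp add: Q_def algebra_simps)
    show ?thesis
      unfolding e by (intro closed_csubspace_diff[OF closed_csubspace_orth]
          closed_csubspace_add[OF closed_csubspace_orth] res PK)
  qed
  moreover have "Q \<circ> Q = Q" using Qid QS by (simp add: fun_eq_iff)
  moreover have "range Q = S"
  proof
    show "S \<subseteq> range Q" using Qid by (metis rangeI subsetI)
  qed (use QS in blast)
  ultimately show ?thesis using compatible_if_idempotent[OF Q] by blast
qed

lemma orth_proj_comp_eq_oblique_proj_iff:
  assumes T: "range T \<subseteq> S" and decomp: "\<And>y. \<exists>s\<in>S. y - s \<in> orth (A ` S)"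
  shows "orth_proj (odiff S (S \<inter> nullspace A)) \<circ> T =
           oblique_proj (odiff S (S \<inter> nullspace A)) (orth (A ` S)) \<longleftrightarrow>
         (\<forall>y. y - T y \<in> orth (A ` S))"
proof -
  let ?P = "orth_proj (S \<inter> nullspace A)"
  have TS: "T y \<in> S" for y using T by blast
  show ?thesis
  proof
    assume eq: "orth_proj (odiff S (S \<inter> nullspace A)) \<circ> T =
                  oblique_proj (odiff S (S \<inter> nullspace A)) (orth (A ` S))"
    show "\<forall>y. y - T y \<in> orth (A ` S)"
    proof
      fix y
      obtain s where s: "s \<in> S" "y - s \<in> orth (A ` S)" using decomp by blast
      have "orth_proj (odiff S (S \<inter> nullspace A)) (T y) = orth_proj (odiff S (S \<inter> nullspace A)) s"
        using fun_cong[OF eq, of y] oblique_proj_eq_orth_proj[OF s] by simp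
      hence "T y - ?P (T y) = s - ?P s"
        unfolding orth_proj_regular_part[OF TS] orth_proj_regular_part[OF s(1)] .
      hence e: "y - T y = (y - s) + ?P s - ?P (T y)" by (simp add: algebra_simps)
      have "?P z \<in> orth (A ` S)" for z
        using orth_proj(1)[OF closed_csubspace_null_part] null_part_subset_orth_image by blast
      thus "y - T y \<in> orth (A ` S)"
        unfolding e by (intro closed_csubspace_diff[OF closed_csubspace_orth]
            closed_csubspace_add[OF closed_csubspace_orth] s(2))
    qed
  next
    assume res: "\<forall>y. y - T y \<in> orth (A ` S)"
    show "orth_proj (odiff S (S \<inter> nullspace A)) \<circ> T =
            oblique_proj (odiff S (S \<inter> nullspace A)) (orth (A ` S))"
      by (simp add: fun_eq_iff oblique_proj_eq_orth_proj[OF TS spec[OF res]])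
  qed
qed

end

theorem mainTheorem7:
  fixes A T :: "'a::chilbert_space \<Rightarrow> 'a" and S :: "'a set"
  assumes "separable_space TYPE('a)"
    and "positive_op A"
    and "closed_csubspace S"
    and "bounded_clinear T"
    and "range T \<subseteq> S"
  shows "is_A_projection A S T \<longleftrightarrow>
    (compatible A S \<and>
     orth_proj (odiff S (S \<inter> nullspace A)) \<circ> T =
       oblique_proj (odiff S (S \<inter> nullspace A)) (orth (A ` S)))"
proof -
  interpret positive_op_subspace_pair A S using assms(2,3) by unfold_locales
  have proj_iff: "is_A_projection A S T \<longleftrightarrow> (\<forall>y. y - T y \<in> orth (A ` S))"
    by (rule A_projection_iff_residual_orth[OF assms(5)])
  show ?thesis
  proof
    assume "is_A_projection A S T"
    hence res: "\<forall>y. y - T y \<in> orth (A ` S)" using proj_iff by blast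
    hence "\<And>y. \<exists>s\<in>S. y - s \<in> orth (A ` S)" using assms(5) by blast
    thus "compatible A S \<and> orth_proj (odiff S (S \<inter> nullspace A)) \<circ> T =
            oblique_proj (odiff S (S \<inter> nullspace A)) (orth (A ` S))"
      using res compatible_if_residual_orth[OF assms(4,5)]
        orth_proj_comp_eq_oblique_proj_iff[OF assms(5)] by blast
  next
    assume "compatible A S \<and> orth_proj (odiff S (S \<inter> nullspace A)) \<circ> T =
              oblique_proj (odiff S (S \<inter> nullspace A)) (orth (A ` S))"
    thus "is_A_projection A S T"
      using proj_iff orth_proj_comp_eq_oblique_proj_iff[OF assms(5)]
        compatible_imp_decomposition by blast
  qed
qed

end
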